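(* Let $\Gamma$ be a Shilla distance-regular graph with $b(\Gamma)=b$ and eigenvalues $\theta_0>\theta_1>\theta_2>\theta_3$. Then: (i) $q^2_{11}>0$; (ii) $q^3_{11}\geq 0$ if and only if $\theta_3\geq -\frac{b(bb_2+c_2)}{b_2+c_2}$. In particular, $\theta_3\geq -\frac{b(bb_2+c_2)}{b_2+c_2}$.
   Context: A connected graph $\Gamma$ of diameter $D$ is distance-regular if there are integers $b_i,c_i$ ($0\le i\le D$) such that for any two vertices $x,y$ at distance $i$, exactly $c_i$ neighbours of $y$ are at distance $i-1$ from $x$ and exactly $b_i$ neighbours of $y$ are at distance $i+1$ from $x$. Then $\Gamma$ is regular of valency $k=b_0$, and $a_i:=k-b_i-c_i$. Its eigenvalues (of the adjacency matrix) are $k=\theta_0>\theta_1>\dots>\theta_D$. A Shilla distance-regular graph is a distance-regular graph of diameter $3$ whose second largest eigenvalue satisfies $\theta_1=a_3$; for such graphs $k=(a_3-a_1)a_3$ and $b(\Gamma):=a_3-a_1=k/a_3$. Let $n$ be the number of vertices and $E_i$ the orthogonal projection onto the eigenspace of $\theta_i$. The Krein parameters $q^h_{ij}$ are defined by $E_i\circ E_j=\frac1n\sum_{h=0}^D q^h_{ij}E_h$, where $\circ$ is the entrywise product. *)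

theory Defs
  imports "HOL-Analysis.Analysis"
begin

definition graph_dist :: "('v \<Rightarrow> 'v \<Rightarrow> bool) \<Rightarrow> 'v \<Rightarrow> 'v \<Rightarrow> nat" where
  "graph_dist G x y = (LEAST m. (G ^^ m) x y)"

definition simple_graph :: "('v \<Rightarrow> 'v \<Rightarrow> bool) \<Rightarrow> bool" where
  "simple_graph G \<longleftrightarrow> (\<forall>x y. G x y \<longrightarrow> G y x) \<and> (\<forall>x. \<not> G x x)"

definition connected_graph :: "('v \<Rightarrow> 'v \<Rightarrow> bool) \<Rightarrow> bool" where
  "connected_graph G \<longleftrightarrow> (\<forall>x y. \<exists>m. (G ^^ m) x y)"

definition graph_diameter :: "('v::finite \<Rightarrow> 'v \<Rightarrow> bool) \<Rightarrow> nat" where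
  "graph_diameter G = Max {graph_dist G x y | x y. True}"

text \<open>Distance-regular with intersection arrays b, c (meaningful for 0 \<le> i \<le> D).\<close>
definition distance_regular ::
  "('v::finite \<Rightarrow> 'v \<Rightarrow> bool) \<Rightarrow> (nat \<Rightarrow> nat) \<Rightarrow> (nat \<Rightarrow> nat) \<Rightarrow> bool" where
  "distance_regular G b c \<longleftrightarrow> simple_graph G \<and> connected_graph G \<and>
     (\<forall>x y. card {z. G y z \<and> graph_dist G x z + 1 = graph_dist G x y} = c (graph_dist G x y)
          \<and> card {z. G y z \<and> graph_dist G x z = graph_dist G x y + 1} = b (graph_dist G x y))"

definition isect_a :: "(nat \<Rightarrow> nat) \<Rightarrow> (nat \<Rightarrow> nat) \<Rightarrow> nat \<Rightarrow> int" where
  "isect_a b c i = int (b 0) - int (b i) - int (c i)"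

definition adj_matrix :: "('v::finite \<Rightarrow> 'v \<Rightarrow> bool) \<Rightarrow> real^'v^'v" where
  "adj_matrix G = (\<chi> i j. if G i j then 1 else 0)"

definition eigenvalues_of :: "real^'v^'v \<Rightarrow> real set" where
  "eigenvalues_of A = {\<theta>. \<exists>v. v \<noteq> 0 \<and> A *v v = \<theta> *\<^sub>R v}"

definition eigenspace_of :: "real^'v^'v \<Rightarrow> real \<Rightarrow> (real^'v) set" where
  "eigenspace_of A \<theta> = {v. A *v v = \<theta> *\<^sub>R v}"

definition eig_proj :: "real^'v::finite^'v \<Rightarrow> real \<Rightarrow> real^'v^'v" where
  "eig_proj A \<theta> = (THE P. transpose P = P \<and> P ** P = P \<and> range (\<lambda>v. P *v v) = eigenspace_of A \<theta>)"

definition hadamard :: "real^'v^'v \<Rightarrow> real^'v^'v \<Rightarrow> real^'v^'v" where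
  "hadamard P Q = (\<chi> i j. P $ i $ j * Q $ i $ j)"

definition krein :: "real^'v::finite^'v \<Rightarrow> (nat \<Rightarrow> real) \<Rightarrow> nat \<Rightarrow> nat \<Rightarrow> nat \<Rightarrow> nat \<Rightarrow> real" where
  "krein A \<theta> D i j h = (THE q :: nat \<Rightarrow> real. (\<forall>l>D. q l = 0) \<and>
      hadamard (eig_proj A (\<theta> i)) (eig_proj A (\<theta> j))
        = (1 / real CARD('v)) *\<^sub>R (\<Sum>l\<le>D. q l *\<^sub>R eig_proj A (\<theta> l))) h"

end

theory Submission
  imports Defs "HOL-Computational_Algebra.Polynomial"
begin

text \<open>
  The distance matrices are \<open>A\<^sub>i = v\<^sub>i(A)\<close> for the distance polynomials \<open>v\<^sub>i\<close>, and
  \<open>(x - a\<^sub>3) v\<^sub>3 - b\<^sub>2 v\<^sub>2\<close> annihilates \<open>A\<close>; being of degree 4 it is a multiple of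
  \<open>\<Prod>\<^sub>j (x - \<theta>\<^sub>j)\<close>, so the orthogonal projections \<open>E\<^sub>h\<close> onto the eigenspaces are the Lagrange
  polynomials of \<open>A\<close> at the \<open>\<theta>\<^sub>h\<close>. They lie in the Bose--Mesner algebra, and comparing the
  traces of \<open>A\<^sub>i E\<^sub>1\<close> gives \<open>E\<^sub>1 = \<Sum>\<^sub>i m v\<^sub>i(\<theta>\<^sub>1) / (n k\<^sub>i) A\<^sub>i\<close> with \<open>m = tr E\<^sub>1\<close>,
  \<open>k\<^sub>i = v\<^sub>i(k)\<close>. Since the Hadamard product of \<open>A\<^sub>i\<close> and \<open>A\<^sub>j\<close> is \<open>\<delta>\<^sub>i\<^sub>j A\<^sub>i\<close>, this yields
  \<open>q\<^sup>h\<^sub>1\<^sub>1 = (m\<^sup>2/n) \<Sum>\<^sub>i v\<^sub>i(\<theta>\<^sub>1)\<^sup>2 v\<^sub>i(\<theta>\<^sub>h) / k\<^sub>i\<^sup>2\<close>.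

  For a Shilla graph \<open>\<theta>\<^sub>1 = a\<^sub>3\<close> is a root of the annihilator, which forces \<open>v\<^sub>2(a\<^sub>3) = 0\<close>,
  i.e. \<open>k = b a\<^sub>3\<close>, and \<open>v\<^sub>3(\<theta>\<^sub>h) = b\<^sub>2 (\<theta>\<^sub>h + b) / c\<^sub>2\<close> at the other eigenvalues. Then
  \<open>q\<^sup>h\<^sub>1\<^sub>1\<close> is a positive multiple of \<open>\<theta>\<^sub>h (b\<^sub>2 + c\<^sub>2) + b (b b\<^sub>2 + c\<^sub>2)\<close> for \<open>h \<noteq> 1\<close>. The Krein
  condition \<open>q\<^sup>3\<^sub>1\<^sub>1 \<ge> 0\<close>, which holds because \<open>E\<^sub>1 \<circ> E\<^sub>1\<close> is positive semidefinite by
  Schur's theorem, is therefore the stated bound on \<open>\<theta>\<^sub>3\<close>, and \<open>\<theta>\<^sub>2 > \<theta>\<^sub>3\<close> gives \<open>q\<^sup>2\<^sub>1\<^sub>1 > 0\<close>.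
\<close>

section \<open>Polynomials in a square matrix\<close>

lemma matrix_add_rdistrib: "((A::real^'n^'n) + B) ** C = A ** C + B ** C"
  by (simp add: matrix_matrix_mult_def vec_eq_iff sum.distrib algebra_simps)

lemma matrix_diff_rdistrib: "((A::real^'n^'n) - B) ** C = A ** C - B ** C"
  by (simp add: matrix_matrix_mult_def vec_eq_iff sum_subtractf algebra_simps)

lemma matrix_sum_rdistrib: "(\<Sum>i\<in>S. F i :: real^'n^'n) ** C = (\<Sum>i\<in>S. F i ** C)"
  by (induction S rule: infinite_finite_induct) (auto simp: matrix_add_rdistrib)

lemma matrix_sum_ldistrib: "(C::real^'n^'n) ** (\<Sum>i\<in>S. F i) = (\<Sum>i\<in>S. C ** F i)"
  by (induction S rule: infinite_finite_induct) (auto simp: matrix_add_ldistrib)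

lemma matrix_sum_vector_rdistrib: "(\<Sum>i\<in>S. F i :: real^'n^'n) *v v = (\<Sum>i\<in>S. F i *v v)"
  by (induction S rule: infinite_finite_induct) (auto simp: matrix_vector_mult_add_rdistrib)

lemma transpose_add: "transpose ((A::real^'n^'n) + B) = transpose A + transpose B"
  by (simp add: transpose_def vec_eq_iff)

definition poly_matrix :: "real poly \<Rightarrow> real^'n^'n \<Rightarrow> real^'n^'n" where
  "poly_matrix p M = fold_coeffs (\<lambda>a N. a *\<^sub>R mat 1 + M ** N) p 0"

lemma poly_matrix_0 [simp]: "poly_matrix 0 M = 0"
  by (simp add: poly_matrix_def)

lemma poly_matrix_pCons: "poly_matrix (pCons a p) M = a *\<^sub>R mat 1 + M ** poly_matrix p M"
  by (cases "p = 0"; cases "a = 0") (simp_all add: poly_matrix_def)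

lemma poly_matrix_1: "poly_matrix 1 M = mat 1"
  by (simp add: one_pCons poly_matrix_pCons)

lemma poly_matrix_X: "poly_matrix [:0, 1:] M = M"
  by (simp add: poly_matrix_pCons)

lemma poly_matrix_add: "poly_matrix (p + q) M = poly_matrix p M + poly_matrix q M"
  by (induction p q rule: poly_induct2)
    (simp_all add: poly_matrix_pCons matrix_add_ldistrib algebra_simps)

lemma poly_matrix_smult: "poly_matrix (smult r p) M = r *\<^sub>R poly_matrix p M"
  by (induction p) (simp_all add: poly_matrix_pCons matrix_scalar_ac scalar_matrix_assoc[symmetric]
      scaleR_add_right)

lemma poly_matrix_diff: "poly_matrix (p - q) M = poly_matrix p M - poly_matrix q M"
  using poly_matrix_add[of p "-q" M] poly_matrix_smult[of "-1" q M] by simp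

lemma poly_matrix_sum: "poly_matrix (\<Sum>i\<in>S. p i) M = (\<Sum>i\<in>S. poly_matrix (p i) M)"
  by (induction S rule: infinite_finite_induct) (simp_all add: poly_matrix_add)

lemma poly_matrix_mult: "poly_matrix (p * q) M = poly_matrix p M ** poly_matrix q M"
proof (induction p)
  case (pCons a p)
  have "poly_matrix (pCons a p * q) M = a *\<^sub>R poly_matrix q M + M ** poly_matrix (p * q) M"
    by (simp add: poly_matrix_add poly_matrix_smult poly_matrix_pCons)
  also have "\<dots> = poly_matrix (pCons a p) M ** poly_matrix q M"
    using pCons by (simp add: poly_matrix_pCons matrix_add_rdistrib
        scalar_matrix_assoc[symmetric] matrix_mul_assoc)
  finally show ?case .
qed simp

lemma poly_matrix_commute: "poly_matrix p M ** poly_matrix q M = poly_matrix q M ** poly_matrix p M"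
  by (metis poly_matrix_mult mult.commute)

lemma poly_matrix_eigen:
  "M ** E = t *\<^sub>R E \<Longrightarrow> poly_matrix p M ** E = poly p t *\<^sub>R E"
  by (induction p) (simp_all add: poly_matrix_pCons matrix_add_rdistrib
      scalar_matrix_assoc[symmetric] matrix_mul_assoc[symmetric] matrix_scalar_ac algebra_simps)

lemma poly_matrix_eigenvector:
  "M *v v = t *\<^sub>R v \<Longrightarrow> poly_matrix p M *v v = poly p t *\<^sub>R v"
  by (induction p) (simp_all add: poly_matrix_pCons matrix_vector_mult_add_rdistrib
      scaleR_matrix_vector_assoc[symmetric] matrix_vector_mul_assoc[symmetric] algebra_simps)

lemma poly_matrix_symmetric:
  assumes "transpose M = M"
  shows "transpose (poly_matrix p M) = poly_matrix p M"
proof (induction p)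
  case (pCons a p)
  have "transpose (M ** poly_matrix p M) = poly_matrix p M ** M"
    using pCons assms by (simp add: matrix_transpose_mul)
  also have "\<dots> = M ** poly_matrix p M"
    using poly_matrix_commute[of p M "[:0, 1:]"] by (simp add: poly_matrix_X)
  finally show ?case
    by (simp add: poly_matrix_pCons transpose_add transpose_scalar)
qed (simp add: transpose_def vec_eq_iff)

lemma idempotent_fixes_range:
  assumes "E ** E = (E::real^'n^'n)" and "w \<in> range (\<lambda>v. E *v v)"
  shows "E *v w = w"
  using assms by (auto simp: matrix_vector_mul_assoc)

lemma symmetric_idempotent_eqI:
  fixes P Q :: "real^'n^'n"
  assumes "transpose P = P" "P ** P = P" "transpose Q = Q" "Q ** Q = Q"
    and "range (\<lambda>v. P *v v) = range (\<lambda>v. Q *v v)"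
  shows "P = Q"
proof -
  have "Q *v (P *v v) = P *v v" "P *v (Q *v v) = Q *v v" for v
    using idempotent_fixes_range[of Q "P *v v"] idempotent_fixes_range[of P "Q *v v"] assms
    by auto
  then have QP: "Q ** P = P" and PQ: "P ** Q = Q"
    by (simp_all add: matrix_eq matrix_vector_mul_assoc)
  have "P = transpose (Q ** P)" using QP assms by simp
  also have "\<dots> = P ** Q" using assms by (simp add: matrix_transpose_mul)
  finally show ?thesis using PQ by simp
qed

lemma symmetric_idempotent_entries:
  fixes E :: "real^'n^'n"
  assumes "transpose E = E" "E ** E = E"
  shows "E $ a $ b = (\<Sum>c\<in>UNIV. E $ a $ c * E $ b $ c)"
proof -
  have "E $ a $ b = (E ** transpose E) $ a $ b" using assms by simp
  then show ?thesis by (simp add: matrix_matrix_mult_def transpose_def)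
qed

lemma symmetric_idempotent_quadratic_nonneg:
  fixes E :: "real^'n^'n"
  assumes "transpose E = E" "E ** E = E"
  shows "u \<bullet> (E *v u) \<ge> 0"
proof -
  have "u \<bullet> (E *v u) = (u v* transpose E) \<bullet> (E *v u)"
    using assms by (simp add: dot_lmul_matrix matrix_vector_mul_assoc)
  then show ?thesis by simp
qed

text \<open>The quadratic form of \<open>E \<circ> E\<close> at \<open>w\<close> is the sum over \<open>c\<close> of the quadratic forms of
  \<open>E\<close> at the vectors \<open>(w\<^sub>a E\<^sub>a\<^sub>c)\<^sub>a\<close> (Schur).\<close>
lemma hadamard_symmetric_idempotent_nonneg:
  fixes E :: "real^'n^'n"
  assumes "transpose E = E" "E ** E = E"
  shows "w \<bullet> (hadamard E E *v w) \<ge> 0"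
proof -
  define u where "u c = (\<chi> a. w $ a * E $ a $ c)" for c
  have "w \<bullet> (hadamard E E *v w) = (\<Sum>a\<in>UNIV. \<Sum>b\<in>UNIV. w $ a * E $ a $ b * E $ a $ b * w $ b)"
    unfolding inner_vec_def hadamard_def matrix_vector_mult_def
    by (simp add: sum_distrib_left mult.assoc)
  also have "\<dots> = (\<Sum>a\<in>UNIV. \<Sum>b\<in>UNIV. \<Sum>c\<in>UNIV.
                     w $ a * E $ a $ b * (E $ a $ c * E $ b $ c) * w $ b)"
    by (subst (2) symmetric_idempotent_entries[OF assms])
      (simp add: sum_distrib_left sum_distrib_right)
  also have "\<dots> = (\<Sum>c\<in>UNIV. \<Sum>a\<in>UNIV. \<Sum>b\<in>UNIV.
                     w $ a * E $ a $ b * (E $ a $ c * E $ b $ c) * w $ b)"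
    by (subst sum.swap, subst (2) sum.swap) (rule refl)
  also have "\<dots> = (\<Sum>c\<in>UNIV. u c \<bullet> (E *v u c))"
    unfolding u_def inner_vec_def matrix_vector_mult_def
    by (simp add: sum_distrib_left mult_ac)
  also have "\<dots> \<ge> 0"
    using symmetric_idempotent_quadratic_nonneg[OF assms] by (simp add: sum_nonneg)
  finally show ?thesis .
qed

lemma trace_symmetric_idempotent_pos:
  fixes E :: "real^'n^'n"
  assumes "transpose E = E" "E ** E = E" "E \<noteq> 0"
  shows "trace E > 0"
proof -
  obtain x0 y0 where nz: "E $ x0 $ y0 \<noteq> 0"
    using assms(3) by (auto simp: vec_eq_iff)
  have "trace E = (\<Sum>x\<in>UNIV. \<Sum>y\<in>UNIV. (E $ x $ y)^2)"
    unfolding trace_def by (subst symmetric_idempotent_entries[OF assms(1,2)])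
      (simp add: power2_eq_square)
  also have "\<dots> > 0"
  proof (rule sum_pos2[of _ x0])
    show "0 < (\<Sum>y\<in>UNIV. (E $ x0 $ y)^2)"
      by (rule sum_pos2[of _ y0]) (use nz in auto)
  qed (auto intro: sum_nonneg)
  finally show ?thesis .
qed

section \<open>Distance-regular graphs\<close>

lemma sum_atMost_3: "(\<Sum>i\<le>3. f i) = f 0 + f 1 + f 2 + f 3"
  for f :: "nat \<Rightarrow> 'a::comm_monoid_add"
  by (simp add: numeral_3_eq_3 numeral_2_eq_2 atMost_Suc add_ac)

lemma card_gt_0_if_mem: "(x::'a::finite) \<in> S \<Longrightarrow> card S > 0"
  by (auto simp: card_gt_0_iff)

locale distance_regular_graph =
  fixes G :: "'v::finite \<Rightarrow> 'v \<Rightarrow> bool" and b c :: "nat \<Rightarrow> nat"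
  assumes distance_regular: "distance_regular G b c"
begin

abbreviation d :: "'v \<Rightarrow> 'v \<Rightarrow> nat" where "d \<equiv> graph_dist G"

abbreviation A :: "real^'v^'v" where "A \<equiv> adj_matrix G"

abbreviation a :: "nat \<Rightarrow> real" where "a i \<equiv> real_of_int (isect_a b c i)"

lemma adj_sym: "G x y \<Longrightarrow> G y x"
  and adj_irrefl: "\<not> G x x"
  and reachable: "\<exists>m. (G ^^ m) x y"
  using distance_regular
  unfolding distance_regular_def simple_graph_def connected_graph_def by auto

lemma card_c_neighbours: "card {z. G y z \<and> d x z + 1 = d x y} = c (d x y)"
  and card_b_neighbours: "card {z. G y z \<and> d x z = d x y + 1} = b (d x y)"
  using distance_regular unfolding distance_regular_def by auto

lemma dist_path: "(G ^^ d x y) x y"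
  unfolding graph_dist_def using reachable by (rule LeastI_ex)

lemma dist_le_path: "(G ^^ m) x y \<Longrightarrow> d x y \<le> m"
  unfolding graph_dist_def by (rule Least_le)

lemma relpowp_adj_sym: "(G ^^ m) x y \<Longrightarrow> (G ^^ m) y x"
proof (induction m arbitrary: y)
  case (Suc m)
  then obtain z where "(G ^^ m) x z" "G z y" by (auto simp: relpowp_Suc_right)
  with Suc.IH have "(G OO G ^^ m) y x" using adj_sym by auto
  then show ?case by (simp add: relpowp_commute relpowp_Suc_right)
qed simp

lemma dist_commute: "d x y = d y x"
  using dist_le_path[OF relpowp_adj_sym[OF dist_path[of x y]]]
    dist_le_path[OF relpowp_adj_sym[OF dist_path[of y x]]] by simp

lemma dist_eq_0_iff: "d x y = 0 \<longleftrightarrow> x = y"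
  using dist_path[of x y] dist_le_path[of 0 x x] by auto

lemma dist_adj_le: "G y z \<Longrightarrow> d x z \<le> d x y + 1"
  using dist_path[of x y] by (intro dist_le_path) (auto simp: relpowp_Suc_right)

lemma dist_adj_ge: "G y z \<Longrightarrow> d x y \<le> d x z + 1"
  using dist_adj_le[of z y x] adj_sym by auto

lemma dist_eq_1_iff: "d x y = 1 \<longleftrightarrow> G x y"
proof
  show "G x y \<Longrightarrow> d x y = 1"
    using dist_adj_le[of x y x] dist_eq_0_iff[of x x] dist_eq_0_iff[of x y] adj_irrefl[of x]
    by fastforce
qed (use dist_path[of x y] in auto)

lemma card_neighbours: "card {z. G x z} = b 0"
proof -
  have "{z. G x z} = {z. G x z \<and> d x z = d x x + 1}"
    using dist_eq_1_iff dist_eq_0_iff[of x x] by auto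
  then show ?thesis using card_b_neighbours[of x x] dist_eq_0_iff[of x x] by simp
qed

lemma c_1: "G x y \<Longrightarrow> c 1 = 1"
proof -
  assume "G x y"
  then have "d x y = 1" using dist_eq_1_iff by simp
  moreover from this have "{z. G y z \<and> d x z + 1 = d x y} = {x}"
    using \<open>G x y\<close> dist_eq_0_iff adj_sym by auto
  ultimately show ?thesis using card_c_neighbours[of y x] by simp
qed

lemma adj_matrix_symmetric: "transpose A = A"
  unfolding transpose_def adj_matrix_def using adj_sym by (auto simp: vec_eq_iff)

lemma adj_matrix_mult_ones: "A *v vec 1 = real (b 0) *\<^sub>R vec 1"
proof -
  have "(A *v vec 1) $ x = real (card {z. G x z})" for x
    unfolding matrix_vector_mult_def adj_matrix_def by (simp add: sum.If_cases)
  then show ?thesis by (simp add: vec_eq_iff card_neighbours)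
qed

text \<open>The Bose--Mesner algebra is the range of \<open>dist_fun_matrix\<close>.\<close>
definition dist_fun_matrix :: "(nat \<Rightarrow> real) \<Rightarrow> real^'v^'v" where
  "dist_fun_matrix f = (\<chi> x y. f (d x y))"

definition dist_matrix :: "nat \<Rightarrow> real^'v^'v" where
  "dist_matrix i = dist_fun_matrix (\<lambda>j. if j = i then 1 else 0)"

lemma dist_fun_matrix_add: "dist_fun_matrix (\<lambda>i. f i + g i) = dist_fun_matrix f + dist_fun_matrix g"
  and dist_fun_matrix_scaleR: "dist_fun_matrix (\<lambda>i. r * f i) = r *\<^sub>R dist_fun_matrix f"
  and dist_fun_matrix_zero: "dist_fun_matrix (\<lambda>i. 0) = 0"
  unfolding dist_fun_matrix_def by (simp_all add: vec_eq_iff)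

lemma dist_matrix_0: "dist_matrix 0 = mat 1"
  unfolding dist_matrix_def dist_fun_matrix_def mat_def using dist_eq_0_iff by (simp add: vec_eq_iff)

lemma dist_matrix_1: "dist_matrix 1 = A"
  unfolding dist_matrix_def dist_fun_matrix_def adj_matrix_def using dist_eq_1_iff
  by (auto simp: vec_eq_iff)

definition adj_action :: "(nat \<Rightarrow> real) \<Rightarrow> nat \<Rightarrow> real" where
  "adj_action f i = real (c i) * f (i - 1) + a i * f i + real (b i) * f (i + 1)"

lemma sum_neighbours_dist_fun:
  "(\<Sum>z\<in>UNIV. if G x z then f (d z y) else 0) = adj_action f (d x y)"
proof -
  define D where "D = d y x"
  define Sm where "Sm = {z. G x z \<and> d y z + 1 = D}"
  define Sp where "Sp = {z. G x z \<and> d y z = D + 1}"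
  define S0 where "S0 = {z. G x z \<and> d y z = D}"
  have N: "{z. G x z} = Sm \<union> S0 \<union> Sp"
    unfolding Sm_def Sp_def S0_def D_def using dist_adj_le[of x _ y] dist_adj_ge[of x _ y]
    by fastforce
  have disj: "Sm \<inter> S0 = {}" "(Sm \<union> S0) \<inter> Sp = {}" unfolding Sm_def Sp_def S0_def by auto
  have cm: "card Sm = c D" unfolding Sm_def D_def by (rule card_c_neighbours)
  have cp: "card Sp = b D" unfolding Sp_def D_def by (rule card_b_neighbours)
  have "card Sm + card S0 + card Sp = b 0"
    using card_neighbours[of x] unfolding N by (simp add: card_Un_disjoint disj)
  then have c0: "real (card S0) = a D" using cm cp unfolding isect_a_def by simp
  have "(\<Sum>z\<in>UNIV. if G x z then f (d z y) else 0) = (\<Sum>z\<in>{z. G x z}. f (d z y))"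
    by (simp add: sum.If_cases)
  also have "\<dots> = (\<Sum>z\<in>Sm. f (d z y)) + (\<Sum>z\<in>S0. f (d z y)) + (\<Sum>z\<in>Sp. f (d z y))"
    unfolding N by (simp add: sum.union_disjoint disj)
  also have "\<dots> = (\<Sum>z\<in>Sm. f (D - 1)) + (\<Sum>z\<in>S0. f D) + (\<Sum>z\<in>Sp. f (D + 1))"
    by (intro arg_cong2[where f = "(+)"] sum.cong)
      (auto simp: Sm_def S0_def Sp_def dist_commute)
  finally show ?thesis by (simp add: adj_action_def cm cp c0 D_def dist_commute)
qed

lemma adj_mult_dist_fun_matrix: "A ** dist_fun_matrix f = dist_fun_matrix (adj_action f)"
proof -
  have "(A ** dist_fun_matrix f) $ x $ y = (\<Sum>z\<in>UNIV. if G x z then f (d z y) else 0)" for x y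
    unfolding matrix_matrix_mult_def adj_matrix_def dist_fun_matrix_def
    by (auto intro: sum.cong)
  then show ?thesis by (simp add: vec_eq_iff sum_neighbours_dist_fun dist_fun_matrix_def)
qed

lemma adj_mult_dist_matrix:
  "A ** dist_matrix (Suc i) = real (b i) *\<^sub>R dist_matrix i + a (Suc i) *\<^sub>R dist_matrix (Suc i)
     + real (c (Suc (Suc i))) *\<^sub>R dist_matrix (Suc (Suc i))"
proof -
  have "adj_action (\<lambda>j. if j = Suc i then 1 else 0)
      = (\<lambda>j. real (b i) * (if j = i then 1 else 0) + a (Suc i) * (if j = Suc i then 1 else 0)
             + real (c (Suc (Suc i))) * (if j = Suc (Suc i) then 1 else 0))"
    by (auto simp: adj_action_def fun_eq_iff)
  then show ?thesis
    unfolding dist_matrix_def adj_mult_dist_fun_matrix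
    by (simp add: dist_fun_matrix_add dist_fun_matrix_scaleR)
qed

lemma poly_matrix_adj_in_bose_mesner: "\<exists>f. poly_matrix p A = dist_fun_matrix f"
proof (induction p)
  case 0 then show ?case using dist_fun_matrix_zero by auto
next
  case (pCons r p)
  then obtain f where f: "poly_matrix p A = dist_fun_matrix f" by blast
  have "poly_matrix (pCons r p) A = dist_fun_matrix (\<lambda>i. r * (if i = 0 then 1 else 0) + adj_action f i)"
    by (simp add: poly_matrix_pCons f adj_mult_dist_fun_matrix dist_fun_matrix_add
        dist_fun_matrix_scaleR dist_matrix_0[unfolded dist_matrix_def])
  then show ?case by blast
qed

fun dist_poly :: "nat \<Rightarrow> real poly" where
  "dist_poly 0 = 1"
| "dist_poly (Suc 0) = [:0, 1:]"
| "dist_poly (Suc (Suc i)) = smult (1 / real (c (Suc (Suc i))))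
     ([:- a (Suc i), 1:] * dist_poly (Suc i) - smult (real (b i)) (dist_poly i))"

lemma poly_matrix_dist_poly:
  assumes "\<And>j. 0 < j \<Longrightarrow> j \<le> i \<Longrightarrow> c j > 0"
  shows "poly_matrix (dist_poly i) A = dist_matrix i"
  using assms
proof (induction i rule: dist_poly.induct)
  case (3 i)
  have "poly_matrix ([:- a (Suc i), 1:] * dist_poly (Suc i) - smult (real (b i)) (dist_poly i)) A
      = A ** dist_matrix (Suc i) - a (Suc i) *\<^sub>R dist_matrix (Suc i) - real (b i) *\<^sub>R dist_matrix i"
    using "3" by (simp add: poly_matrix_diff poly_matrix_mult poly_matrix_smult poly_matrix_pCons
        matrix_add_rdistrib scalar_matrix_assoc[symmetric])
  also have "\<dots> = real (c (Suc (Suc i))) *\<^sub>R dist_matrix (Suc (Suc i))"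
    by (simp add: adj_mult_dist_matrix)
  finally show ?case using "3.prems"[of "Suc (Suc i)"] by (simp add: poly_matrix_smult)
qed (simp_all add: poly_matrix_1 poly_matrix_X dist_matrix_0 dist_matrix_1[unfolded One_nat_def])

end

locale drg_diameter_3 = distance_regular_graph G b c
  for G :: "'v::finite \<Rightarrow> 'v \<Rightarrow> bool" and b c +
  assumes diameter: "graph_diameter G = 3"
begin

lemma dist_values: "{d x y | x y. True} = (\<lambda>(x, y). d x y) ` UNIV"
  by auto

lemma dist_le_3: "d x y \<le> 3"
proof -
  have "d x y \<le> Max ((\<lambda>(x, y). d x y) ` UNIV)"
    by (rule Max_ge) auto
  then show ?thesis using diameter unfolding graph_diameter_def dist_values by simp
qed

lemma ex_dist_3: "\<exists>x y. d x y = 3"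
proof -
  have "Max ((\<lambda>(x, y). d x y) ` UNIV) \<in> (\<lambda>(x, y). d x y) ` UNIV"
    by (rule Max_in) auto
  then show ?thesis using diameter unfolding graph_diameter_def dist_values by force
qed

lemma intersection_numbers_pos: "b 0 > 0" "b 1 > 0" "b 2 > 0" "c 1 = 1" "c 2 > 0" "c 3 > 0"
proof -
  obtain x y where xy: "d x y = 3" using ex_dist_3 by blast
  have "(G ^^ (2 + 1)) x y" using dist_path[of x y] xy by simp
  then obtain z where z: "(G ^^ 2) x z" "G z y" unfolding relpowp_add by auto
  have dz: "d x z = 2" using dist_le_path[OF z(1)] dist_adj_le[OF z(2), of x] xy by simp
  have "(G ^^ (1 + 1)) x z" by (subst one_add_one) (rule z(1))
  then obtain w where w: "G x w" "G w z" unfolding relpowp_add by auto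
  have dw: "d x w = 1" using w(1) dist_eq_1_iff by simp
  have "z \<in> {u. G y u \<and> d x u + 1 = d x y}" using xy dz z(2) adj_sym by auto
  from card_gt_0_if_mem[OF this] show "c 3 > 0" using card_c_neighbours[of y x] xy by simp
  have "y \<in> {u. G z u \<and> d x u = d x z + 1}" using xy dz z(2) by auto
  from card_gt_0_if_mem[OF this] show "b 2 > 0" using card_b_neighbours[of z x] dz by simp
  have "w \<in> {u. G z u \<and> d x u + 1 = d x z}" using dw dz w(2) adj_sym by auto
  from card_gt_0_if_mem[OF this] show "c 2 > 0" using card_c_neighbours[of z x] dz by simp
  have "z \<in> {u. G w u \<and> d x u = d x w + 1}" using dw dz w(2) by auto
  from card_gt_0_if_mem[OF this] show "b 1 > 0" using card_b_neighbours[of w x] dw by simp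
  have "w \<in> {u. G x u}" using w(1) by simp
  from card_gt_0_if_mem[OF this] show "b 0 > 0" using card_neighbours[of x] by simp
  show "c 1 = 1" using c_1 w(1) .
qed

lemma dist_fun_matrix_eq_sum: "dist_fun_matrix f = (\<Sum>i\<le>3. f i *\<^sub>R dist_matrix i)"
proof -
  have "(\<Sum>i\<le>3. f i * (if j = i then 1 else 0)) = f j" if "j \<le> 3" for j
    using that by (simp add: if_distrib cong: if_cong)
  then show ?thesis
    unfolding dist_matrix_def dist_fun_matrix_def using dist_le_3
    by (simp add: vec_eq_iff sum_component)
qed

lemma dist_matrix_4: "dist_matrix 4 = 0"
proof -
  have "d x y \<noteq> 4" for x y using dist_le_3[of x y] by simp
  then show ?thesis unfolding dist_matrix_def dist_fun_matrix_def by (simp add: vec_eq_iff)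
qed

lemma poly_matrix_dist_poly_le_3: "i \<le> 3 \<Longrightarrow> poly_matrix (dist_poly i) A = dist_matrix i"
  by (rule poly_matrix_dist_poly)
    (use intersection_numbers_pos in \<open>auto simp: le_Suc_eq numeral_3_eq_3 numeral_2_eq_2\<close>)

lemma dist_poly_1: "dist_poly 1 = [:0, 1:]"
  by simp

lemma dist_poly_2: "dist_poly 2 = smult (1 / real (c 2)) [:- real (b 0), - a 1, 1:]"
  by (simp add: numeral_2_eq_2)

lemma dist_poly_3:
  "dist_poly 3 = smult (1 / real (c 3)) ([:- a 2, 1:] * dist_poly 2 - smult (real (b 1)) [:0, 1:])"
  by (simp add: numeral_3_eq_3 numeral_2_eq_2)

text \<open>Up to the factor \<open>c\<^sub>4\<close> (meaningless in diameter 3) this is the fourth distance polynomial.\<close>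
definition annihilator :: "real poly" where
  "annihilator = [:- a 3, 1:] * dist_poly 3 - smult (real (b 2)) (dist_poly 2)"

lemma poly_matrix_annihilator: "poly_matrix annihilator A = 0"
proof -
  have "A ** dist_matrix 3 = real (b 2) *\<^sub>R dist_matrix 2 + a 3 *\<^sub>R dist_matrix 3"
    using adj_mult_dist_matrix[of 2] dist_matrix_4 by (simp add: numeral_Bit0 numeral_3_eq_3)
  then show ?thesis
    unfolding annihilator_def
    by (simp add: poly_matrix_diff poly_matrix_mult poly_matrix_smult poly_matrix_pCons
        poly_matrix_dist_poly_le_3 matrix_add_rdistrib scalar_matrix_assoc[symmetric])
qed

lemma degree_annihilator: "degree annihilator \<le> 4"
  unfolding annihilator_def dist_poly_3 dist_poly_2
  by (rule degree_le) (simp add: coeff_eq_0 numeral_eq_Suc)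

lemma coeff_annihilator_4: "coeff annihilator 4 = 1 / (real (c 2) * real (c 3))"
  unfolding annihilator_def dist_poly_3 dist_poly_2 by (simp add: numeral_eq_Suc)

lemma poly_dist_poly_2: "poly (dist_poly 2) x = (x^2 - a 1 * x - real (b 0)) / real (c 2)"
  using intersection_numbers_pos unfolding dist_poly_2 by (simp add: field_simps power2_eq_square)

lemma poly_dist_poly_3:
  "poly (dist_poly 3) x = ((x - a 2) * poly (dist_poly 2) x - real (b 1) * x) / real (c 3)"
  using intersection_numbers_pos unfolding dist_poly_3 by (simp add: field_simps)

lemma a_1: "a 1 = real (b 0) - real (b 1) - 1"
  and a_2: "a 2 = real (b 0) - real (b 2) - real (c 2)"
  using intersection_numbers_pos unfolding isect_a_def by simp_all

lemma dist_poly_at_valency: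
  "poly (dist_poly 2) (b 0) = real (b 0) * real (b 1) / real (c 2)"
  "poly (dist_poly 3) (b 0) = real (b 0) * real (b 1) * real (b 2) / (real (c 2) * real (c 3))"
proof -
  show v2: "poly (dist_poly 2) (b 0) = real (b 0) * real (b 1) / real (c 2)"
    unfolding poly_dist_poly_2 a_1 by (simp add: algebra_simps power2_eq_square)
  show "poly (dist_poly 3) (b 0) = real (b 0) * real (b 1) * real (b 2) / (real (c 2) * real (c 3))"
    unfolding poly_dist_poly_3 v2 a_2 using intersection_numbers_pos
    by (simp add: field_simps)
qed

lemma dist_poly_at_valency_pos: "i \<le> 3 \<Longrightarrow> poly (dist_poly i) (b 0) > 0"
  using intersection_numbers_pos dist_poly_at_valency
  by (auto simp: le_Suc_eq numeral_3_eq_3 numeral_2_eq_2)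

end

section \<open>Spectral idempotents and Krein parameters\<close>

locale drg_diameter_3_spectrum = drg_diameter_3 G b c
  for G :: "'v::finite \<Rightarrow> 'v \<Rightarrow> bool" and b c +
  fixes \<theta> :: "nat \<Rightarrow> real"
  assumes eigenvalues_decreasing: "\<theta> 0 > \<theta> 1" "\<theta> 1 > \<theta> 2" "\<theta> 2 > \<theta> 3"
    and eigenvalues: "\<theta> ` {0..3} = eigenvalues_of A"
begin

lemma eigenvalue_less: "i < j \<Longrightarrow> j \<le> 3 \<Longrightarrow> \<theta> j < \<theta> i"
  using eigenvalues_decreasing
  by (auto simp: less_Suc_eq numeral_3_eq_3 numeral_2_eq_2 le_Suc_eq)

lemma eigenvalue_inj: "inj_on \<theta> {..3}"
  by (rule inj_onI) (metis atMost_iff eigenvalue_less less_irrefl nat_neq_iff)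

lemma card_eigenvalues: "card (\<theta> ` {..3}) = 4"
  using eigenvalue_inj by (simp add: card_image)

lemma has_eigenvector: "h \<le> 3 \<Longrightarrow> \<exists>v. v \<noteq> 0 \<and> A *v v = \<theta> h *\<^sub>R v"
  using eigenvalues unfolding eigenvalues_of_def by auto

lemma annihilator_root: "h \<le> 3 \<Longrightarrow> poly annihilator (\<theta> h) = 0"
proof -
  assume "h \<le> 3"
  then obtain v where v: "v \<noteq> 0" "A *v v = \<theta> h *\<^sub>R v" using has_eigenvector by blast
  have "poly annihilator (\<theta> h) *\<^sub>R v = 0"
    using poly_matrix_eigenvector[OF v(2), of annihilator] poly_matrix_annihilator by simp
  then show ?thesis using v(1) by simp
qed

definition min_poly :: "real poly" where
  "min_poly = (\<Prod>j\<le>3. [:- \<theta> j, 1:])"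

lemma annihilator_eq_min_poly: "annihilator = smult (1 / (real (c 2) * real (c 3))) min_poly"
proof (rule poly_eqI_degree_lead_coeff[where n = 4 and A = "\<theta> ` {..3}"])
  have deg: "degree min_poly = 4"
    unfolding min_poly_def by (simp add: degree_prod_eq_sum_degree)
  moreover have "lead_coeff min_poly = 1"
    unfolding min_poly_def by (simp add: lead_coeff_prod)
  ultimately show "coeff annihilator 4 = coeff (smult (1 / (real (c 2) * real (c 3))) min_poly) 4"
    and "degree (smult (1 / (real (c 2) * real (c 3))) min_poly) \<le> 4"
    by (simp_all add: coeff_annihilator_4)
  show "4 \<le> card (\<theta> ` {..3})" using card_eigenvalues by simp
  show "degree annihilator \<le> 4" by (rule degree_annihilator)
  fix z assume "z \<in> \<theta> ` {..3}"
  then obtain h where "h \<le> 3" "z = \<theta> h" by auto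
  moreover have "poly min_poly (\<theta> h) = 0"
    using \<open>h \<le> 3\<close> unfolding min_poly_def poly_prod by (intro prod_zero) auto
  ultimately show "poly annihilator z = poly (smult (1 / (real (c 2) * real (c 3))) min_poly) z"
    using annihilator_root by simp
qed

lemma poly_matrix_min_poly: "poly_matrix min_poly A = 0"
proof -
  have "min_poly = smult (real (c 2) * real (c 3)) annihilator"
    using annihilator_eq_min_poly intersection_numbers_pos by simp
  then show ?thesis by (simp add: poly_matrix_annihilator poly_matrix_smult)
qed

definition lagrange :: "nat \<Rightarrow> real poly" where
  "lagrange h = smult (1 / (\<Prod>j\<in>{..3}-{h}. \<theta> h - \<theta> j)) (\<Prod>j\<in>{..3}-{h}. [:- \<theta> j, 1:])"

definition E :: "nat \<Rightarrow> real^'v^'v" where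
  "E h = poly_matrix (lagrange h) A"

lemma poly_lagrange: "l \<le> 3 \<Longrightarrow> h \<le> 3 \<Longrightarrow> poly (lagrange l) (\<theta> h) = (if l = h then 1 else 0)"
proof -
  assume lh: "l \<le> 3" "h \<le> 3"
  have "(\<Prod>j\<in>{..3}-{l}. \<theta> l - \<theta> j) \<noteq> 0"
    using eigenvalue_inj lh(1) by (auto simp: inj_on_def)
  moreover have "l \<noteq> h \<Longrightarrow> (\<Prod>j\<in>{..3}-{l}. \<theta> h - \<theta> j) = 0"
    using lh by (intro prod_zero) auto
  ultimately show ?thesis by (auto simp: lagrange_def poly_prod)
qed

lemma degree_lagrange: "h \<le> 3 \<Longrightarrow> degree (lagrange h) \<le> 3"
proof -
  assume "h \<le> 3"
  have "degree (\<Prod>j\<in>{..3}-{h}. [:- \<theta> j, 1:]) \<le> (\<Sum>j\<in>{..3}-{h}. degree [:- \<theta> j, 1:])"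
    using degree_prod_sum_le[of "{..3}-{h}" "\<lambda>j. [:- \<theta> j, 1:]"] by (simp add: o_def)
  also have "\<dots> \<le> 3" using \<open>h \<le> 3\<close> by (simp add: card_Diff_singleton)
  finally show ?thesis unfolding lagrange_def using degree_smult_le order_trans by blast
qed

lemma sum_lagrange: "(\<Sum>h\<le>3. lagrange h) = 1"
proof (rule poly_eqI_degree[of "\<theta> ` {..3}"])
  fix x assume "x \<in> \<theta> ` {..3}"
  then obtain l where "l \<le> 3" "x = \<theta> l" by auto
  then show "poly (\<Sum>h\<le>3. lagrange h) x = poly 1 x"
    by (simp add: poly_sum poly_lagrange if_distrib cong: if_cong)
next
  show "degree (\<Sum>h\<le>3. lagrange h) < card (\<theta> ` {..3})"
    using card_eigenvalues degree_sum_le[of "{..3}" lagrange 3] degree_lagrange by fastforce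
qed (simp add: card_eigenvalues)

lemma adj_mult_E: "h \<le> 3 \<Longrightarrow> A ** E h = \<theta> h *\<^sub>R E h"
proof -
  assume "h \<le> 3"
  then have "[:- \<theta> h, 1:] * lagrange h = smult (1 / (\<Prod>j\<in>{..3}-{h}. \<theta> h - \<theta> j)) min_poly"
    unfolding lagrange_def min_poly_def by (simp add: prod.remove[of "{..3}" h] mult_smult_right)
  then have "poly_matrix ([:- \<theta> h, 1:] * lagrange h) A = 0"
    by (simp add: poly_matrix_smult poly_matrix_min_poly)
  then have "(A - \<theta> h *\<^sub>R mat 1) ** E h = 0"
    unfolding poly_matrix_mult E_def by (simp add: poly_matrix_pCons)
  then show ?thesis by (simp add: matrix_diff_rdistrib scalar_matrix_assoc[symmetric])
qed

lemma E_mult_E: "l \<le> 3 \<Longrightarrow> h \<le> 3 \<Longrightarrow> E l ** E h = (if l = h then E h else 0)"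
  using poly_matrix_eigen[OF adj_mult_E, of h "lagrange l"] poly_lagrange[of l h]
  unfolding E_def by auto

lemma E_idempotent: "h \<le> 3 \<Longrightarrow> E h ** E h = E h"
  using E_mult_E by simp

lemma sum_E: "(\<Sum>h\<le>3. E h) = mat 1"
  using poly_matrix_sum[of lagrange "{..3}" A] by (simp add: sum_lagrange poly_matrix_1 E_def)

lemma E_mult_eigenvector:
  "l \<le> 3 \<Longrightarrow> h \<le> 3 \<Longrightarrow> A *v v = \<theta> h *\<^sub>R v \<Longrightarrow> E l *v v = (if l = h then v else 0)"
  using poly_matrix_eigenvector[of A v "\<theta> h" "lagrange l"] poly_lagrange[of l h]
  unfolding E_def by auto

lemma E_nonzero: "h \<le> 3 \<Longrightarrow> E h \<noteq> 0"
  using has_eigenvector E_mult_eigenvector by fastforce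

lemma E_symmetric: "transpose (E h) = E h"
  unfolding E_def by (rule poly_matrix_symmetric[OF adj_matrix_symmetric])

lemma range_E: "h \<le> 3 \<Longrightarrow> range (\<lambda>v. E h *v v) = eigenspace_of A (\<theta> h)"
proof
  assume h: "h \<le> 3"
  show "range (\<lambda>v. E h *v v) \<subseteq> eigenspace_of A (\<theta> h)"
    using adj_mult_E[OF h]
    by (auto simp: eigenspace_of_def matrix_vector_mul_assoc scaleR_matrix_vector_assoc)
  show "eigenspace_of A (\<theta> h) \<subseteq> range (\<lambda>v. E h *v v)"
  proof
    fix w assume "w \<in> eigenspace_of A (\<theta> h)"
    then have "E h *v w = w" using E_mult_eigenvector[OF h h] by (simp add: eigenspace_of_def)
    then show "w \<in> range (\<lambda>v. E h *v v)" by (metis rangeI)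
  qed
qed

lemma eig_proj_eq_E: "h \<le> 3 \<Longrightarrow> eig_proj A (\<theta> h) = E h"
  unfolding eig_proj_def
proof (rule the_equality)
  assume h: "h \<le> 3"
  show "transpose (E h) = E h \<and> E h ** E h = E h \<and> range (\<lambda>v. E h *v v) = eigenspace_of A (\<theta> h)"
    using E_symmetric E_idempotent[OF h] range_E[OF h] by simp
  show "transpose P = P \<and> P ** P = P \<and> range (\<lambda>v. P *v v) = eigenspace_of A (\<theta> h) \<Longrightarrow> P = E h"
    for P using symmetric_idempotent_eqI[of P "E h"] E_symmetric E_idempotent[OF h] range_E[OF h]
    by simp
qed

lemma dist_matrix_mult_E:
  "i \<le> 3 \<Longrightarrow> h \<le> 3 \<Longrightarrow> dist_matrix i ** E h = poly (dist_poly i) (\<theta> h) *\<^sub>R E h"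
  using poly_matrix_eigen[OF adj_mult_E, of h "dist_poly i"] poly_matrix_dist_poly_le_3 by simp

lemma dist_matrix_eq_sum_E:
  "i \<le> 3 \<Longrightarrow> dist_matrix i = (\<Sum>h\<le>3. poly (dist_poly i) (\<theta> h) *\<^sub>R E h)"
  using matrix_sum_ldistrib[of "dist_matrix i" E "{..3}"]
  by (simp add: sum_E dist_matrix_mult_E)

lemma sum_scaleR_E_mult_E: "h \<le> 3 \<Longrightarrow> (\<Sum>l\<le>3. r l *\<^sub>R E l) ** E h = r h *\<^sub>R E h"
  by (simp add: matrix_sum_rdistrib scalar_matrix_assoc[symmetric] E_mult_E if_distrib
      cong: if_cong)

definition E_coeff :: "nat \<Rightarrow> nat \<Rightarrow> real" where
  "E_coeff h = (SOME f. E h = dist_fun_matrix f)"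

lemma E_eq_dist_fun_matrix: "E h = dist_fun_matrix (E_coeff h)"
  unfolding E_coeff_def E_def by (rule someI_ex[OF poly_matrix_adj_in_bose_mesner])

definition krein_coeff :: "nat \<Rightarrow> nat \<Rightarrow> nat \<Rightarrow> real" where
  "krein_coeff i j h = (if h \<le> 3
     then real CARD('v) * (\<Sum>l\<le>3. E_coeff i l * E_coeff j l * poly (dist_poly l) (\<theta> h)) else 0)"

lemma hadamard_E:
  "hadamard (E i) (E j) = (1 / real CARD('v)) *\<^sub>R (\<Sum>h\<le>3. krein_coeff i j h *\<^sub>R E h)"
proof -
  have "hadamard (E i) (E j) = dist_fun_matrix (\<lambda>l. E_coeff i l * E_coeff j l)"
    unfolding E_eq_dist_fun_matrix hadamard_def dist_fun_matrix_def by (simp add: vec_eq_iff)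
  also have "\<dots> = (\<Sum>l\<le>3. \<Sum>h\<le>3. (E_coeff i l * E_coeff j l * poly (dist_poly l) (\<theta> h)) *\<^sub>R E h)"
    by (simp add: dist_fun_matrix_eq_sum dist_matrix_eq_sum_E scaleR_sum_right)
  also have "\<dots> = (1 / real CARD('v)) *\<^sub>R (\<Sum>h\<le>3. krein_coeff i j h *\<^sub>R E h)"
    by (subst sum.swap) (simp add: krein_coeff_def scaleR_sum_right scaleR_sum_left)
  finally show ?thesis .
qed

lemma krein_eq_krein_coeff: "i \<le> 3 \<Longrightarrow> j \<le> 3 \<Longrightarrow> krein A \<theta> 3 i j h = krein_coeff i j h"
proof -
  assume ij: "i \<le> 3" "j \<le> 3"
  have proj: "(\<Sum>l\<le>3. q l *\<^sub>R eig_proj A (\<theta> l)) = (\<Sum>l\<le>3. q l *\<^sub>R E l)" for q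
    using eig_proj_eq_E by simp
  have "(THE q. (\<forall>l>3. q l = 0) \<and> hadamard (eig_proj A (\<theta> i)) (eig_proj A (\<theta> j))
          = (1 / real CARD('v)) *\<^sub>R (\<Sum>l\<le>3. q l *\<^sub>R eig_proj A (\<theta> l))) = krein_coeff i j"
  proof (rule the_equality)
    fix q assume "(\<forall>l>3. q l = 0) \<and> hadamard (eig_proj A (\<theta> i)) (eig_proj A (\<theta> j))
        = (1 / real CARD('v)) *\<^sub>R (\<Sum>l\<le>3. q l *\<^sub>R eig_proj A (\<theta> l))"
    then have q: "\<forall>l>3. q l = 0" "(\<Sum>l\<le>3. q l *\<^sub>R E l) = (\<Sum>l\<le>3. krein_coeff i j l *\<^sub>R E l)"
      using hadamard_E[of i j] eig_proj_eq_E ij by (simp_all add: proj)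
    show "q = krein_coeff i j"
    proof
      fix h show "q h = krein_coeff i j h"
      proof (cases "h \<le> 3")
        case True
        then have "q h *\<^sub>R E h = krein_coeff i j h *\<^sub>R E h"
          using arg_cong[OF q(2), of "\<lambda>M. M ** E h"] by (simp add: sum_scaleR_E_mult_E)
        then show ?thesis using E_nonzero[OF True] by (simp add: scaleR_cancel_right)
      qed (use q in \<open>simp add: krein_coeff_def\<close>)
    qed
  qed (use hadamard_E eig_proj_eq_E ij in \<open>simp add: proj krein_coeff_def\<close>)
  then show ?thesis unfolding krein_def by simp
qed

lemma dist_matrix_mult_ones: "i \<le> 3 \<Longrightarrow> dist_matrix i *v vec 1 = poly (dist_poly i) (b 0) *\<^sub>R vec 1"
  using poly_matrix_eigenvector[OF adj_matrix_mult_ones] poly_matrix_dist_poly_le_3 by metis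

text \<open>The trace of \<open>A\<^sub>i E\<^sub>h\<close>, computed entrywise and via \<open>A\<^sub>i E\<^sub>h = v\<^sub>i(\<theta>\<^sub>h) E\<^sub>h\<close>.\<close>
lemma E_coeff_eq:
  assumes "i \<le> 3" "h \<le> 3"
  shows "E_coeff h i * real CARD('v) * poly (dist_poly i) (b 0) = poly (dist_poly i) (\<theta> h) * trace (E h)"
proof -
  have "(dist_matrix i ** E h) $ x $ x = E_coeff h i * poly (dist_poly i) (b 0)" for x
  proof -
    have "(dist_matrix i ** E h) $ x $ x = E_coeff h i * (dist_matrix i *v vec 1) $ x"
      unfolding matrix_matrix_mult_def matrix_vector_mult_def dist_matrix_def
        E_eq_dist_fun_matrix dist_fun_matrix_def
      by (auto simp: sum_distrib_left dist_commute intro: sum.cong)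
    then show ?thesis using dist_matrix_mult_ones[OF assms(1)] by simp
  qed
  then have "trace (dist_matrix i ** E h) = real CARD('v) * (E_coeff h i * poly (dist_poly i) (b 0))"
    by (simp add: trace_def)
  moreover have "trace (dist_matrix i ** E h) = poly (dist_poly i) (\<theta> h) * trace (E h)"
    by (simp add: dist_matrix_mult_E assms trace_def sum_distrib_left)
  ultimately show ?thesis by (simp add: mult_ac)
qed

lemma trace_E_pos: "h \<le> 3 \<Longrightarrow> trace (E h) > 0"
  using trace_symmetric_idempotent_pos E_symmetric E_idempotent E_nonzero by blast

lemma krein_nonneg: "i \<le> 3 \<Longrightarrow> h \<le> 3 \<Longrightarrow> krein A \<theta> 3 i i h \<ge> 0"
proof -
  assume i: "i \<le> 3" and h: "h \<le> 3"
  obtain w where w: "w \<noteq> 0" "A *v w = \<theta> h *\<^sub>R w" using has_eigenvector[OF h] by blast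
  have "(\<Sum>l\<le>3. krein_coeff i i l *\<^sub>R (E l *v w))
      = (\<Sum>l\<le>3. if l = h then krein_coeff i i h *\<^sub>R w else 0)"
    using E_mult_eigenvector[OF _ h w(2)] by (intro sum.cong) auto
  also have "\<dots> = krein_coeff i i h *\<^sub>R w" using h by simp
  finally have "(\<Sum>l\<le>3. krein_coeff i i l *\<^sub>R (E l *v w)) = krein_coeff i i h *\<^sub>R w" .
  then have "hadamard (E i) (E i) *v w = (krein_coeff i i h / real CARD('v)) *\<^sub>R w"
    unfolding hadamard_E
    by (simp add: scaleR_matrix_vector_assoc[symmetric] matrix_sum_vector_rdistrib)
  then have "0 \<le> (krein_coeff i i h / real CARD('v)) * (w \<bullet> w)"
    using hadamard_symmetric_idempotent_nonneg[OF E_symmetric E_idempotent[OF i], of w] by simp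
  moreover have "w \<bullet> w > 0" using w(1) by simp
  ultimately show ?thesis
    using krein_eq_krein_coeff[OF i i] by (simp add: zero_le_mult_iff zero_le_divide_iff)
qed

lemma E_coeff_formula:
  "i \<le> 3 \<Longrightarrow> h \<le> 3 \<Longrightarrow>
    E_coeff h i = poly (dist_poly i) (\<theta> h) * trace (E h) / (real CARD('v) * poly (dist_poly i) (b 0))"
  using E_coeff_eq[of i h] dist_poly_at_valency_pos[of i] by (simp add: field_simps)

lemma krein_ii_eq:
  assumes "i \<le> 3" "h \<le> 3"
  shows "krein A \<theta> 3 i i h = trace (E i)^2 / real CARD('v) *
           (\<Sum>l\<le>3. poly (dist_poly l) (\<theta> i)^2 * poly (dist_poly l) (\<theta> h) / poly (dist_poly l) (b 0)^2)"
proof -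
  have "E_coeff i l * E_coeff i l * poly (dist_poly l) (\<theta> h) * real CARD('v) = trace (E i)^2
      / real CARD('v) * (poly (dist_poly l) (\<theta> i)^2 * poly (dist_poly l) (\<theta> h) / poly (dist_poly l) (b 0)^2)"
    if "l \<le> 3" for l
    using that assms dist_poly_at_valency_pos[OF that]
    by (simp add: E_coeff_formula field_simps power2_eq_square)
  then show ?thesis
    using assms by (simp add: krein_eq_krein_coeff krein_coeff_def sum_distrib_left sum_distrib_right
        mult.commute[of "real CARD('v)"])
qed

end

section \<open>Shilla graphs\<close>

locale shilla_graph = drg_diameter_3_spectrum G b c \<theta>
  for G :: "'v::finite \<Rightarrow> 'v \<Rightarrow> bool" and b c \<theta> +
  assumes shilla: "\<theta> 1 = a 3"
begin

abbreviation shilla_b :: real where "shilla_b \<equiv> a 3 - a 1"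

lemma poly_dist_poly_2_shilla: "poly (dist_poly 2) (a 3) = 0"
proof -
  have "poly annihilator (a 3) = 0" using annihilator_root[of 1] shilla by simp
  then show ?thesis using intersection_numbers_pos by (simp add: annihilator_def)
qed

lemma valency_eq: "real (b 0) = shilla_b * a 3"
  using poly_dist_poly_2_shilla intersection_numbers_pos
  by (simp add: poly_dist_poly_2 algebra_simps power2_eq_square)

lemma shilla_b_nonzero: "shilla_b \<noteq> 0" and a_3_nonzero: "a 3 \<noteq> 0"
  using valency_eq intersection_numbers_pos by auto

lemma poly_dist_poly_2_factor: "poly (dist_poly 2) x = (x - a 3) * (x + shilla_b) / real (c 2)"
  unfolding poly_dist_poly_2 valency_eq by (simp add: algebra_simps power2_eq_square)

lemma poly_dist_poly_3_shilla: "poly (dist_poly 3) (a 3) = - real (b 1) * a 3 / real (c 3)"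
  by (simp add: poly_dist_poly_3 poly_dist_poly_2_shilla)

text \<open>At the other eigenvalues the annihilator gives \<open>(\<theta> - a\<^sub>3) v\<^sub>3(\<theta>) = b\<^sub>2 v\<^sub>2(\<theta>)\<close>, and
  the factor \<open>\<theta> - a\<^sub>3\<close> of \<open>v\<^sub>2(\<theta>)\<close> cancels.\<close>
lemma poly_dist_poly_3_eigenvalue:
  assumes "h \<le> 3" "h \<noteq> 1"
  shows "poly (dist_poly 3) (\<theta> h) = real (b 2) * (\<theta> h + shilla_b) / real (c 2)"
proof -
  have ne: "\<theta> h \<noteq> a 3" using eigenvalue_inj assms shilla by (auto simp: inj_on_def)
  have "(\<theta> h - a 3) * poly (dist_poly 3) (\<theta> h) = real (b 2) * poly (dist_poly 2) (\<theta> h)"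
    using annihilator_root[OF assms(1)] by (simp add: annihilator_def algebra_simps)
  also have "\<dots> = (\<theta> h - a 3) * (real (b 2) * (\<theta> h + shilla_b) / real (c 2))"
    by (simp add: poly_dist_poly_2_factor)
  finally show ?thesis using ne by (subst (asm) mult_cancel_left) simp
qed

lemma krein_sum_shilla:
  assumes "h \<le> 3" "h \<noteq> 1"
  shows "(\<Sum>l\<le>3. poly (dist_poly l) (\<theta> 1)^2 * poly (dist_poly l) (\<theta> h) / poly (dist_poly l) (b 0)^2)
    = (\<theta> h * (real (b 2) + real (c 2)) + shilla_b * (shilla_b * real (b 2) + real (c 2)))
      / (shilla_b^2 * real (b 2))"
proof -
  have field_identity: "1 + a3^2 * t / k^2 + (b1 * a3 / c3)^2 * (b2 * (t + B) / c2) / (k * b1 * b2 / (c2 * c3))^2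
      = (t * (b2 + c2) + B * (B * b2 + c2)) / (B^2 * b2)"
    if "k = B * a3" "B \<noteq> 0" "a3 \<noteq> 0" "b1 > 0" "b2 > 0" "c2 > 0" "c3 > 0"
    for k B a3 b1 b2 c2 c3 t :: real
    using that by (simp add: field_simps power2_eq_square)
  have "(\<Sum>l\<le>3. poly (dist_poly l) (\<theta> 1)^2 * poly (dist_poly l) (\<theta> h) / poly (dist_poly l) (b 0)^2)
    = 1 + a 3^2 * \<theta> h / real (b 0)^2 + (real (b 1) * a 3 / real (c 3))^2
        * (real (b 2) * (\<theta> h + shilla_b) / real (c 2))
        / (real (b 0) * real (b 1) * real (b 2) / (real (c 2) * real (c 3)))^2"
    unfolding sum_atMost_3 shilla
    by (simp add: dist_poly_1 poly_dist_poly_2_shilla poly_dist_poly_3_shilla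
        poly_dist_poly_3_eigenvalue[OF assms] dist_poly_at_valency power_mult_distrib)
  also have "\<dots> = (\<theta> h * (real (b 2) + real (c 2)) + shilla_b * (shilla_b * real (b 2) + real (c 2)))
      / (shilla_b^2 * real (b 2))"
    using valency_eq shilla_b_nonzero a_3_nonzero intersection_numbers_pos
    by (intro field_identity) simp_all
  finally show ?thesis .
qed

definition shilla_bound :: real where
  "shilla_bound = - (shilla_b * (shilla_b * real (b 2) + real (c 2)) / (real (b 2) + real (c 2)))"

lemma krein_11_shilla:
  assumes "h \<le> 3" "h \<noteq> 1"
  shows "krein A \<theta> 3 1 1 h = trace (E 1)^2 * (real (b 2) + real (c 2))
           / (real CARD('v) * shilla_b^2 * real (b 2)) * (\<theta> h - shilla_bound)"
proof -
  have "\<theta> h * (real (b 2) + real (c 2)) + shilla_b * (shilla_b * real (b 2) + real (c 2))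
      = (real (b 2) + real (c 2)) * (\<theta> h - shilla_bound)"
    using intersection_numbers_pos by (simp add: shilla_bound_def field_simps)
  then show ?thesis
    using krein_ii_eq[of 1 h] krein_sum_shilla[OF assms] assms by (simp add: mult_ac)
qed

lemma krein_11_shilla_factor_pos:
  "trace (E 1)^2 * (real (b 2) + real (c 2)) / (real CARD('v) * shilla_b^2 * real (b 2)) > 0"
  using trace_E_pos[of 1] shilla_b_nonzero intersection_numbers_pos by simp

lemma krein_11_nonneg_iff:
  assumes "h \<le> 3" "h \<noteq> 1"
  shows "krein A \<theta> 3 1 1 h \<ge> 0 \<longleftrightarrow> \<theta> h \<ge> shilla_bound"
  using krein_11_shilla_factor_pos unfolding krein_11_shilla[OF assms] zero_le_mult_iff by auto

lemma krein_11_pos_iff: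
  assumes "h \<le> 3" "h \<noteq> 1"
  shows "krein A \<theta> 3 1 1 h > 0 \<longleftrightarrow> \<theta> h > shilla_bound"
  using krein_11_shilla_factor_pos unfolding krein_11_shilla[OF assms] zero_less_mult_iff by auto

end

theorem proposition15:
  fixes G :: "'v::finite \<Rightarrow> 'v \<Rightarrow> bool"
    and b c :: "nat \<Rightarrow> nat"
    and \<theta> :: "nat \<Rightarrow> real"
  assumes drg: "distance_regular G b c"
    and diam: "graph_diameter G = 3"
    and shilla: "\<theta> 1 = real_of_int (isect_a b c 3)"
    and eig_dec: "\<theta> 0 > \<theta> 1" "\<theta> 1 > \<theta> 2" "\<theta> 2 > \<theta> 3"
    and eig_all: "\<theta> ` {0..3} = eigenvalues_of (adj_matrix G)"
  shows "let bb = real_of_int (isect_a b c 3 - isect_a b c 1);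
             bound = - (bb * (bb * real (b 2) + real (c 2)) / (real (b 2) + real (c 2)))
         in krein (adj_matrix G) \<theta> 3 1 1 2 > 0
            \<and> (krein (adj_matrix G) \<theta> 3 1 1 3 \<ge> 0 \<longleftrightarrow> \<theta> 3 \<ge> bound)
            \<and> \<theta> 3 \<ge> bound"
proof -
  interpret shilla_graph G b c \<theta>
    by unfold_locales (use assms in auto)
  have bound: "shilla_bound \<le> \<theta> 3"
    using krein_nonneg[of 1 3] krein_11_nonneg_iff[of 3] by simp
  then have "krein A \<theta> 3 1 1 2 > 0"
    using krein_11_pos_iff[of 2] eig_dec(3) by simp
  with bound show ?thesis
    using krein_11_nonneg_iff[of 3] unfolding Let_def shilla_bound_def by simp
qed

end
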